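(* Let $G$ and $H$ be connected graphs, each with at least two vertices, such that $\delta(H)>|V(H)|/2$. Let $S\subseteq E(G\times H)$. <ol> <li>If $|S|<\delta(G)\delta(H)$, then every $H$-fiber ${}_xH$ ($x\in V(G)$) is contained in a single connected component of $G\times H-S$.</li> <li>Assume it is not the case that $G\cong K_2$ and $H\cong\overline{K_{2l-1}}\vee lK_2$ for some integer $l\ge1$. Assume also that $|S|=\delta(G)\delta(H)$ and that $S$ is not the set of all edges incident with any single vertex of $G\times H$. Then every $H$-fiber ${}_xH$ is contained in a single connected component of $G\times H-S$.</li> </ol>
   Context: All graphs are finite, simple and undirected. $\delta(\cdot)$ denotes minimum degree. The direct product $G\times H$ has vertex set $V(G)\times V(H)$. Two vertices $(x,u),(y,v)$ are adjacent if and only if $xy\in E(G)$ and $uv\in E(H)$. For $x\in V(G)$, the $H$-fiber is ${}_xH=\{(x,u):u\in V(H)\}$. $\overline{K_{2l-1}}\vee lK_2$ is the join of an edgeless graph on $2l-1$ vertices with a perfect matching on $2l$ vertices. Equivalently, it is $K_{2l-1,2l}$ with $l$ pairwise disjoint edges added inside the part of size $2l$. *)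

theory Defs
  imports Complex_Main
begin

definition graph :: "'a set \<Rightarrow> 'a set set \<Rightarrow> bool" where
  "graph V E \<longleftrightarrow> finite V \<and> (\<forall>e\<in>E. \<exists>u v. e = {u, v} \<and> u \<noteq> v \<and> u \<in> V \<and> v \<in> V)"

definition degree :: "'a set \<Rightarrow> 'a set set \<Rightarrow> 'a \<Rightarrow> nat" where
  "degree V E v = card {u \<in> V. {u, v} \<in> E}"

definition min_degree :: "'a set \<Rightarrow> 'a set set \<Rightarrow> nat" where
  "min_degree V E = Min (degree V E ` V)"

definition reachable :: "'a set set \<Rightarrow> 'a \<Rightarrow> 'a \<Rightarrow> bool" where
  "reachable E = (\<lambda>a b. {a, b} \<in> E)\<^sup>*\<^sup>*"

definition connected :: "'a set \<Rightarrow> 'a set set \<Rightarrow> bool" where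
  "connected V E \<longleftrightarrow> V \<noteq> {} \<and> (\<forall>u\<in>V. \<forall>v\<in>V. reachable E u v)"

definition dprod_V :: "'a set \<Rightarrow> 'b set \<Rightarrow> ('a \<times> 'b) set" where
  "dprod_V VG VH = VG \<times> VH"

definition dprod_E :: "'a set set \<Rightarrow> 'b set set \<Rightarrow> ('a \<times> 'b) set set" where
  "dprod_E EG EH = {{(x, u), (y, v)} | x y u v. {x, y} \<in> EG \<and> {u, v} \<in> EH}"

definition graph_iso :: "'a set \<Rightarrow> 'a set set \<Rightarrow> 'b set \<Rightarrow> 'b set set \<Rightarrow> bool" where
  "graph_iso V E V' E' \<longleftrightarrow> (\<exists>f. bij_betw f V V' \<and>
      (\<forall>u\<in>V. \<forall>v\<in>V. {u, v} \<in> E \<longleftrightarrow> {f u, f v} \<in> E'))"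

definition K2_V :: "nat set" where "K2_V = {0, 1}"
definition K2_E :: "nat set set" where "K2_E = {{0, 1}}"

text \<open>The join of the edgeless graph on vertices 0..2l-2 with the perfect matching
  on vertices 2l-1..4l-2, matching 2l-1+2i with 2l+2i for i < l.\<close>
definition join_V :: "nat \<Rightarrow> nat set" where
  "join_V l = {0..<4*l - 1}"

definition join_E :: "nat \<Rightarrow> nat set set" where
  "join_E l = {{a, b} | a b. a < 2*l - 1 \<and> 2*l - 1 \<le> b \<and> b < 4*l - 1}
            \<union> {{2*l - 1 + 2*i, 2*l + 2*i} | i. i < l}"

definition incident_edges :: "'a set set \<Rightarrow> 'a \<Rightarrow> 'a set set" where
  "incident_edges E w = {e \<in> E. w \<in> e}"

end

theory Submission
  imports Defs
begin

text \<open>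
  Let \<open>\<delta>(H) > |V(H)|/2\<close> and suppose that
  removing \<open>S\<close> separates two vertices \<open>(x, u)\<close>, \<open>(x, v)\<close> of one \<open>H\<close>-fibre.  Let \<open>A\<close> be the
  component of \<open>(x, u)\<close> and write \<open>A\<^sub>y\<close> for its fibre over \<open>y\<close>.  For every neighbour \<open>y\<close> of
  \<open>x\<close>, the product edges between the fibres over \<open>x\<close> and \<open>y\<close> that leave \<open>A\<close> lie in \<open>S\<close>,
  and their number is the mixed cut of the pair \<open>(A\<^sub>x, A\<^sub>y)\<close> in \<open>H\<close>.  Since \<open>A\<^sub>x\<close> is a
  nonempty proper subset of \<open>V(H)\<close>, a counting argument in the dense graph \<open>H\<close> shows that
  each such mixed cut has at least \<open>\<delta>(H)\<close> arcs, whence \<open>|S| \<ge> deg(x)\<delta>(H) \<ge> \<delta>(G)\<delta>(H)\<close>.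
  In the case of equality the mixed cuts are all minimum; analysing the minimum cuts of
  \<open>H\<close> shows that either some \<open>A\<^sub>y\<close> is split, which forces \<open>H\<close> to be a join graph and
  \<open>G = K\<^sub>2\<close>, or all \<open>A\<^sub>y\<close> are trivial, which forces \<open>S\<close> to be the edge set at one vertex.
\<close>

lemma graph_no_loop: "graph V E \<Longrightarrow> {a, a} \<notin> E"
  unfolding graph_def by (auto simp: doubleton_eq_iff)

lemma graph_edge_vertices: "graph V E \<Longrightarrow> {a, b} \<in> E \<Longrightarrow> a \<in> V \<and> b \<in> V"
  unfolding graph_def by (fastforce simp: doubleton_eq_iff)

lemma min_degree_le: "finite V \<Longrightarrow> a \<in> V \<Longrightarrow> min_degree V E \<le> degree V E a"
  unfolding min_degree_def by (intro Min_le) auto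

definition nbr :: "'a set \<Rightarrow> 'a set set \<Rightarrow> 'a \<Rightarrow> 'a set" where
  "nbr V E a = {b \<in> V. {a, b} \<in> E}"

lemma degree_eq_card_nbr: "degree V E a = card (nbr V E a)"
  unfolding degree_def nbr_def by (simp add: insert_commute)

lemma nbr_subset: "graph V E \<Longrightarrow> nbr V E a \<subseteq> V - {a}"
  unfolding nbr_def using graph_no_loop by fastforce

lemma connected_has_nbr:
  assumes "graph V E" and "connected V E" and "card V \<ge> 2" and "x \<in> V"
  shows "nbr V E x \<noteq> {}"
proof -
  have "\<not> V \<subseteq> {x}" using assms(3) card_mono[of "{x}" V] by auto
  then obtain w where w: "w \<in> V" "w \<noteq> x" by blast
  have "reachable E x w" using assms(2,4) w(1) unfolding connected_def by blast
  then obtain y where "{x, y} \<in> E" using w(2) unfolding reachable_def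
    by (induction rule: converse_rtranclp_induct) auto
  thus ?thesis using graph_edge_vertices[OF assms(1)] unfolding nbr_def by blast
qed

lemma K2_if_mutual_pendants:
  assumes G: "graph V E" "connected V E" and x: "x \<in> V"
    and nx: "nbr V E x = {y}" and ny: "nbr V E y = {x}"
  shows "graph_iso V E K2_V K2_E"
proof -
  have y: "y \<in> V" "{x, y} \<in> E" "y \<noteq> x" using nx nbr_subset[OF G(1), of x] unfolding nbr_def by auto
  have "w \<in> {x, y}" if "w \<in> V" for w
  proof -
    have "reachable E x w" using G(2) x that unfolding connected_def by blast
    thus ?thesis unfolding reachable_def
    proof (induction rule: rtranclp_induct)
      case (step w w')
      have "w' \<in> V" using graph_edge_vertices[OF G(1) step(2)] by simp
      hence "w' \<in> nbr V E w" using step(2) unfolding nbr_def by simp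
      thus ?case using step(3) nx ny by auto
    qed simp
  qed
  hence V: "V = {x, y}" using x y by blast
  define f :: "_ \<Rightarrow> nat" where "f w = (if w = x then 0 else 1)" for w
  have "bij_betw f V K2_V" unfolding V K2_V_def f_def bij_betw_def using y(3) by (auto simp: inj_on_def)
  moreover have "\<forall>u\<in>V. \<forall>v\<in>V. {u, v} \<in> E \<longleftrightarrow> {f u, f v} \<in> K2_E"
    unfolding V K2_E_def f_def using y graph_no_loop[OF G(1)] by (auto simp: insert_commute doubleton_eq_iff)
  ultimately show ?thesis unfolding graph_iso_def by blast
qed

definition is_join :: "'a set \<Rightarrow> 'a set set \<Rightarrow> bool" where
  "is_join V E \<longleftrightarrow> (\<exists>l\<ge>1. graph_iso V E (join_V l) (join_E l))"

lemma involution_numbering: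
  assumes "finite Y" and "\<forall>b\<in>Y. \<sigma> b \<in> Y \<and> \<sigma> b \<noteq> b \<and> \<sigma> (\<sigma> b) = b"
  shows "\<exists>h. bij_betw h Y {0..<card Y} \<and> even (card Y) \<and>
     (\<forall>b\<in>Y. h (\<sigma> b) = (if even (h b) then h b + 1 else h b - 1))"
  using assms
proof (induction "card Y" arbitrary: Y rule: less_induct)
  case less
  show ?case
  proof (cases "Y = {}")
    case True thus ?thesis by (auto simp: bij_betw_def)
  next
    case False
    then obtain b where b: "b \<in> Y" by blast
    define Y' where "Y' = Y - {b, \<sigma> b}"
    have sb: "\<sigma> b \<in> Y" "\<sigma> b \<noteq> b" using less.prems b by auto
    have "2 \<le> card Y" using card_mono[OF less.prems(1), of "{b, \<sigma> b}"] b sb by simp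
    hence cY: "card Y = card Y' + 2" unfolding Y'_def using less.prems(1) b sb
      by (simp add: card_Diff_subset)
    have cl: "\<forall>c\<in>Y'. \<sigma> c \<in> Y' \<and> \<sigma> c \<noteq> c \<and> \<sigma> (\<sigma> c) = c"
      unfolding Y'_def using less.prems(2) b by (auto, metis)
    obtain h' where h': "bij_betw h' Y' {0..<card Y'}" "even (card Y')"
      "\<forall>c\<in>Y'. h' (\<sigma> c) = (if even (h' c) then h' c + 1 else h' c - 1)"
      using less.hyps[of Y'] cY less.prems(1) cl unfolding Y'_def by auto
    define m where "m = card Y'"
    define h where "h c = (if c = b then m else if c = \<sigma> b then m + 1 else h' c)" for c
    have "bij_betw h Y' {0..<m}"
      using h'(1) unfolding h_def m_def Y'_def by (rule bij_betw_cong[THEN iffD1, rotated]) auto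
    moreover have "bij_betw h {b, \<sigma> b} {m, m + 1}"
      using sb unfolding h_def bij_betw_def by auto
    ultimately have "bij_betw h (Y' \<union> {b, \<sigma> b}) ({0..<m} \<union> {m, m + 1})"
      by (rule bij_betw_combine) auto
    moreover have "Y' \<union> {b, \<sigma> b} = Y" unfolding Y'_def using b sb by auto
    moreover have "{0..<m} \<union> {m, m + 1} = {0..<card Y}" using cY unfolding m_def by auto
    ultimately have bij: "bij_betw h Y {0..<card Y}" by simp
    have "h (\<sigma> c) = (if even (h c) then h c + 1 else h c - 1)" if c: "c \<in> Y" for c
    proof (cases "c = b \<or> c = \<sigma> b")
      case True thus ?thesis using less.prems(2) b h'(2) unfolding h_def m_def by auto
    next
      case False
      hence "c \<in> Y'" "\<sigma> c \<noteq> b" "\<sigma> c \<noteq> \<sigma> b" using c cl less.prems(2) b unfolding Y'_def by auto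
      thus ?thesis using False h'(3) unfolding h_def by auto
    qed
    thus ?thesis using bij cY h'(2) by auto
  qed
qed

lemma join_E_char:
  assumes "l \<ge> 1"
  shows "{p, q} \<in> join_E l \<longleftrightarrow> (p < 2*l-1 \<and> 2*l-1 \<le> q \<and> q < 4*l-1) \<or> (q < 2*l-1 \<and> 2*l-1 \<le> p \<and> p < 4*l-1)
     \<or> (\<exists>i<l. (p = 2*l-1+2*i \<and> q = 2*l+2*i) \<or> (q = 2*l-1+2*i \<and> p = 2*l+2*i))"
  unfolding join_E_def by (auto simp: doubleton_eq_iff)

lemma half_eq_iff:
  fixes n k :: nat
  shows "n div 2 = k \<longleftrightarrow> n = 2*k \<or> n = 2*k + 1"
proof
  assume "n div 2 = k"
  moreover have "n = 2*(n div 2) + n mod 2" "n mod 2 < 2" by simp_all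
  ultimately show "n = 2*k \<or> n = 2*k + 1" by linarith
qed auto

lemma partner_index_iff:
  fixes m n :: nat
  shows "n = (if even m then m + 1 else m - 1) \<longleftrightarrow> m \<noteq> n \<and> m div 2 = n div 2"
proof (cases "even m")
  case True
  then obtain k where "m = 2*k" by (auto elim: evenE)
  thus ?thesis using half_eq_iff[of n k] by auto
next
  case False
  then obtain k where "m = 2*k + 1" by (auto elim: oddE)
  thus ?thesis using half_eq_iff[of n k] by auto
qed

lemma matched_indices_iff:
  fixes m n l :: nat
  assumes "m < 2*l"
  shows "(\<exists>i<l. (m = 2*i \<and> n = 2*i + 1) \<or> (n = 2*i \<and> m = 2*i + 1)) \<longleftrightarrow> m \<noteq> n \<and> m div 2 = n div 2"
proof
  assume "\<exists>i<l. (m = 2*i \<and> n = 2*i + 1) \<or> (n = 2*i \<and> m = 2*i + 1)"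
  then obtain i where "(m = 2*i \<and> n = 2*i + 1) \<or> (n = 2*i \<and> m = 2*i + 1)" by blast
  thus "m \<noteq> n \<and> m div 2 = n div 2" by (elim disjE conjE) simp_all
next
  assume "m \<noteq> n \<and> m div 2 = n div 2"
  moreover have "m div 2 < l" using assms by simp
  ultimately show "\<exists>i<l. (m = 2*i \<and> n = 2*i + 1) \<or> (n = 2*i \<and> m = 2*i + 1)"
    using half_eq_iff[of m "m div 2"] half_eq_iff[of n "m div 2"] by auto
qed

lemma perfect_matching_numbering:
  assumes gr: "graph V E" and finY: "finite Y" and YY: "\<forall>b\<in>Y. card {c\<in>Y. {b, c} \<in> E} = 1"
  shows "\<exists>h l. bij_betw h Y {0..<2*l} \<and> card Y = 2*l \<and>
           (\<forall>b\<in>Y. \<forall>c\<in>Y. {b, c} \<in> E \<longleftrightarrow> h b \<noteq> h c \<and> h b div 2 = h c div 2)"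
proof -
  define \<sigma> where "\<sigma> b = (THE c. c \<in> Y \<and> {b, c} \<in> E)" for b
  have partner: "\<sigma> b \<in> Y \<and> (\<forall>c\<in>Y. {b, c} \<in> E \<longleftrightarrow> c = \<sigma> b)" if b: "b \<in> Y" for b
  proof -
    obtain c where c: "{c' \<in> Y. {b, c'} \<in> E} = {c}" using YY b by (metis card_1_singletonE)
    hence "\<sigma> b = c" unfolding \<sigma>_def by (intro the_equality) auto
    thus ?thesis using c by auto
  qed
  have inv: "\<forall>b\<in>Y. \<sigma> b \<in> Y \<and> \<sigma> b \<noteq> b \<and> \<sigma> (\<sigma> b) = b"
  proof
    fix b assume b: "b \<in> Y"
    have e: "\<sigma> b \<in> Y" "{b, \<sigma> b} \<in> E" using partner[OF b] by auto
    hence "\<sigma> (\<sigma> b) = b" using partner[of "\<sigma> b"] b by (simp add: insert_commute)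
    moreover have "\<sigma> b \<noteq> b" using e graph_no_loop[OF gr] by force
    ultimately show "\<sigma> b \<in> Y \<and> \<sigma> b \<noteq> b \<and> \<sigma> (\<sigma> b) = b" using e by blast
  qed
  obtain h where h: "bij_betw h Y {0..<card Y}" "even (card Y)"
    "\<forall>b\<in>Y. h (\<sigma> b) = (if even (h b) then h b + 1 else h b - 1)"
    using involution_numbering[OF finY inv] by blast
  obtain l where l: "card Y = 2*l" using h(2) by (auto elim: evenE)
  have "{b, c} \<in> E \<longleftrightarrow> h b \<noteq> h c \<and> h b div 2 = h c div 2" if bc: "b \<in> Y" "c \<in> Y" for b c
  proof -
    have "{b, c} \<in> E \<longleftrightarrow> h c = h (\<sigma> b)"
      using partner[OF bc(1)] bc inj_on_eq_iff[OF bij_betw_imp_inj_on[OF h(1)]] by auto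
    also have "\<dots> \<longleftrightarrow> h b \<noteq> h c \<and> h b div 2 = h c div 2"
      unfolding h(3)[rule_format, OF bc(1)] by (rule partner_index_iff)
    finally show ?thesis .
  qed
  thus ?thesis using h(1) l by auto
qed

lemma join_vertex_bij:
  assumes "X \<inter> Y = {}" and "l \<ge> 1"
    and g: "bij_betw g X {0..<2*l - 1}" and h: "bij_betw h Y {0..<2*l}"
  shows "bij_betw (\<lambda>a. if a \<in> X then g a else 2*l - 1 + h a) (X \<union> Y) (join_V l)"
proof -
  define F where "F a = (if a \<in> X then g a else 2*l - 1 + h a)" for a
  have "bij_betw F X {0..<2*l - 1}"
    by (rule bij_betw_cong[THEN iffD1, OF _ g]) (simp add: F_def)
  moreover have "(+) (2*l - 1) ` {0..<2*l} = {2*l - 1..<4*l - 1}"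
    by (subst image_add_atLeastLessThan) (use assms(2) in simp)
  hence "bij_betw ((+) (2*l - 1) \<circ> h) Y {2*l - 1..<4*l - 1}"
    using h by (intro bij_betw_trans[of h _ "{0..<2*l}"]) (auto simp: bij_betw_def)
  hence "bij_betw F Y {2*l - 1..<4*l - 1}"
    by (rule bij_betw_cong[THEN iffD1, rotated]) (use assms(1) in \<open>auto simp: F_def\<close>)
  ultimately have "bij_betw F (X \<union> Y) ({0..<2*l - 1} \<union> {2*l - 1..<4*l - 1})"
    by (rule bij_betw_combine) auto
  moreover have "{0..<2*l - 1} \<union> {2*l - 1..<4*l - 1} = join_V l" unfolding join_V_def using assms(2) by auto
  ultimately show ?thesis unfolding F_def by simp
qed

lemma is_join_if_structure:
  assumes gr: "graph V E" and XY: "X \<inter> Y = {}" "X \<union> Y = V"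
    and XX: "\<forall>a\<in>X. \<forall>b\<in>X. {a, b} \<notin> E" and XYe: "\<forall>a\<in>X. \<forall>b\<in>Y. {a, b} \<in> E"
    and YY: "\<forall>b\<in>Y. card {c\<in>Y. {b, c} \<in> E} = 1" and cXY: "card X + 1 = card Y"
  shows "is_join V E"
proof -
  have finX: "finite X" and finY: "finite Y" using gr XY unfolding graph_def by auto
  obtain h l where h: "bij_betw h Y {0..<2*l}" "card Y = 2*l"
    and matched: "\<forall>b\<in>Y. \<forall>c\<in>Y. {b, c} \<in> E \<longleftrightarrow> h b \<noteq> h c \<and> h b div 2 = h c div 2"
    using perfect_matching_numbering[OF gr finY YY] by blast
  have l1: "l \<ge> 1" using h(2) cXY by simp
  have "card X = 2*l - 1" using h(2) cXY by simp
  then obtain g where g: "bij_betw g X {0..<2*l - 1}" using ex_bij_betw_finite_nat[OF finX] by metis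
  define F where "F a = (if a \<in> X then g a else 2*l - 1 + h a)" for a
  have bij: "bij_betw F V (join_V l)"
    using join_vertex_bij[OF XY(1) l1 g h(1)] XY(2) unfolding F_def by simp
  have hlt: "h b < 2*l" if "b \<in> Y" for b using h(1) that by (auto simp: bij_betw_def)
  have glt: "g a < 2*l - 1" if "a \<in> X" for a using g that by (auto simp: bij_betw_def)
  have edges: "{u, v} \<in> E \<longleftrightarrow> {F u, F v} \<in> join_E l" if u: "u \<in> V" and v: "v \<in> V" for u v
  proof -
    consider "u \<in> X" "v \<in> X" | "u \<in> X" "v \<in> Y" | "u \<in> Y" "v \<in> X" | "u \<in> Y" "v \<in> Y"
      using u v XY by blast
    thus ?thesis
    proof cases
      case 1
      thus ?thesis using XX glt[OF 1(1)] glt[OF 1(2)] unfolding F_def join_E_char[OF l1] by auto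
    next
      case 2
      thus ?thesis using XY XYe glt[OF 2(1)] hlt[OF 2(2)] unfolding F_def join_E_char[OF l1] by auto
    next
      case 3
      thus ?thesis using XY XYe glt[OF 3(2)] hlt[OF 3(1)] unfolding F_def join_E_char[OF l1]
        by (auto simp: insert_commute)
    next
      case 4
      have "u \<notin> X" "v \<notin> X" using 4 XY by auto
      hence "{F u, F v} \<in> join_E l \<longleftrightarrow>
          (\<exists>i<l. (h u = 2*i \<and> h v = 2*i + 1) \<or> (h v = 2*i \<and> h u = 2*i + 1))"
        using l1 unfolding F_def join_E_char[OF l1] by auto
      also have "\<dots> \<longleftrightarrow> h u \<noteq> h v \<and> h u div 2 = h v div 2"
        using matched_indices_iff[OF hlt[OF 4(1)]] .
      finally show ?thesis using matched 4 by simp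
    qed
  qed
  show ?thesis using l1 bij edges unfolding is_join_def graph_iso_def by blast
qed

text \<open>When \<open>X\<close> and \<open>Y\<close> are the
  fibres of one vertex set over two adjacent vertices of \<open>G\<close>, the mixed cut counts the
  product edges between these fibres that leave the vertex set.\<close>

definition arcs :: "'a set \<Rightarrow> 'a set set \<Rightarrow> 'a set \<Rightarrow> 'a set \<Rightarrow> nat" where
  "arcs V E P Q = card {(a, b) \<in> V \<times> V. {a, b} \<in> E \<and> a \<in> P \<and> b \<in> Q}"

definition mixed_cut :: "'a set \<Rightarrow> 'a set set \<Rightarrow> 'a set \<Rightarrow> 'a set \<Rightarrow> nat" where
  "mixed_cut V E X Y = card {(a, b) \<in> V \<times> V. {a, b} \<in> E \<and> (a \<in> X) \<noteq> (b \<in> Y)}"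

lemma arcs_eq_sum:
  assumes "finite V"
  shows "arcs V E P Q = (\<Sum>a\<in>V\<inter>P. card (nbr V E a \<inter> Q))"
proof -
  have "{(a,b)\<in>V\<times>V. {a,b}\<in>E \<and> a\<in>P \<and> b\<in>Q} = Sigma (V\<inter>P) (\<lambda>a. nbr V E a \<inter> Q)"
    unfolding nbr_def by auto
  thus ?thesis unfolding arcs_def using assms by (simp add: nbr_def)
qed

lemma arcs_swap: "arcs V E P Q = arcs V E Q P"
proof -
  have "{(a,b)\<in>V\<times>V. {a,b}\<in>E \<and> a\<in>Q \<and> b\<in>P} = prod.swap ` {(a,b)\<in>V\<times>V. {a,b}\<in>E \<and> a\<in>P \<and> b\<in>Q}"
    by (auto simp: insert_commute image_iff)
  thus ?thesis unfolding arcs_def by (simp add: card_image)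
qed

lemma arcs_lower_bound:
  assumes "finite V" and "\<forall>a\<in>V. d \<le> card (nbr V E a)"
  shows "card (V\<inter>P) * (d - card (V - Q)) \<le> arcs V E P Q"
proof -
  have "card (nbr V E a \<inter> Q) \<ge> d - card (V - Q)" if a: "a \<in> V" for a
  proof -
    have "nbr V E a \<subseteq> (nbr V E a \<inter> Q) \<union> (V - Q)" unfolding nbr_def by auto
    hence "card (nbr V E a) \<le> card ((nbr V E a \<inter> Q) \<union> (V - Q))"
      using assms(1) by (intro card_mono) (auto simp: nbr_def)
    also have "\<dots> \<le> card (nbr V E a \<inter> Q) + card (V - Q)" by (rule card_Un_le)
    finally show ?thesis using assms(2) a by fastforce
  qed
  hence "(\<Sum>a\<in>V\<inter>P. d - card (V - Q)) \<le> (\<Sum>a\<in>V\<inter>P. card (nbr V E a \<inter> Q))"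
    by (intro sum_mono) auto
  thus ?thesis using arcs_eq_sum[OF assms(1)] by simp
qed

lemma nbr_subset_if_no_arcs:
  assumes "finite V" and "X \<subseteq> V" and "arcs V E X (V - Y) = 0" and "a \<in> X"
  shows "nbr V E a \<subseteq> Y"
proof
  fix b assume b: "b \<in> nbr V E a"
  have "finite {(a, b) \<in> V \<times> V. {a, b} \<in> E \<and> a \<in> X \<and> b \<in> V - Y}"
    using assms(1) by (auto intro: finite_subset)
  hence "(a, b) \<notin> {(a, b) \<in> V \<times> V. {a, b} \<in> E \<and> a \<in> X \<and> b \<in> V - Y}"
    using assms(3) unfolding arcs_def by auto
  thus "b \<in> Y" using b assms(2,4) unfolding nbr_def by auto
qed

lemma mixed_cut_split:
  assumes "finite V"
  shows "mixed_cut V E X Y = arcs V E X (V-Y) + arcs V E (V-X) Y"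
proof -
  have "{(a,b)\<in>V\<times>V. {a,b}\<in>E \<and> (a\<in>X) \<noteq> (b\<in>Y)} =
    {(a,b)\<in>V\<times>V. {a,b}\<in>E \<and> a\<in>X \<and> b\<in>V-Y} \<union> {(a,b)\<in>V\<times>V. {a,b}\<in>E \<and> a\<in>V-X \<and> b\<in>Y}" by auto
  moreover have "finite (V\<times>V)" using assms by simp
  ultimately show ?thesis unfolding mixed_cut_def arcs_def
    by (subst card_Un_disjoint[symmetric]) (auto intro: finite_subset)
qed

lemma mixed_cut_compl: "mixed_cut V E (V - X) (V - Y) = mixed_cut V E X Y"
  unfolding mixed_cut_def by (rule arg_cong[of _ _ card]) auto

text \<open>The shape forced by a mixed cut of minimum size: if \<open>Y\<close> is trivial then \<open>X\<close> differs from
  \<open>Y\<close> in a single vertex; otherwise the graph is a join graph.\<close>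

definition extremal_cut :: "'a set \<Rightarrow> 'a set set \<Rightarrow> 'a set \<Rightarrow> 'a set \<Rightarrow> bool" where
  "extremal_cut V E X Y \<longleftrightarrow>
     (if Y = {} \<or> Y = V then card {a \<in> V. (a \<in> X) \<noteq> (a \<in> Y)} = 1 else is_join V E)"

lemma extremal_cut_compl:
  assumes "Y \<subseteq> V"
  shows "extremal_cut V E (V - X) (V - Y) = extremal_cut V E X Y"
proof -
  have "V - Y = {} \<or> V - Y = V \<longleftrightarrow> Y = {} \<or> Y = V" using assms by auto
  moreover have "{a \<in> V. (a \<in> V - X) \<noteq> (a \<in> V - Y)} = {a \<in> V. (a \<in> X) \<noteq> (a \<in> Y)}" by auto
  ultimately show ?thesis unfolding extremal_cut_def by simp
qed

lemma cross_products_bound: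
  fixes p q d :: nat
  assumes "p < d" "0 < q" "q < d"
  shows "d \<le> p * (d - q) + q * (d - p)"
    and "p * (d - q) + q * (d - p) = d \<Longrightarrow> 0 < p \<Longrightarrow> d = 2"
proof -
  obtain s where s: "d - q = Suc s" using assms(3) by (metis Suc_diff_Suc)
  obtain r where r: "q = Suc r" using assms(2) by (metis gr0_conv_Suc)
  have sum: "p * (d - q) + q * (d - p) = d + p * s + r * (d - p)" using s r assms(1) by simp
  thus "d \<le> p * (d - q) + q * (d - p)" by simp
  assume "p * (d - q) + q * (d - p) = d" and "0 < p"
  hence "s = 0" "r = 0" using sum assms(1) by simp_all
  thus "d = 2" using s r assms(3) by simp
qed

lemma add_le_mult_plus_one:
  fixes a b :: nat
  assumes "1 \<le> a" "1 \<le> b"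
  shows "a + b \<le> a * b + 1"
  using assms by (cases a; cases b) auto

locale dense_graph =
  fixes V :: "'a set" and E :: "'a set set" and d :: nat
  assumes graph: "graph V E" and min_nbrs: "\<forall>a\<in>V. d \<le> card (nbr V E a)"
    and dense: "card V < 2 * d"
begin

lemma finite_V: "finite V"
  using graph unfolding graph_def by simp

lemma card_gt_d: "V \<noteq> {} \<Longrightarrow> d + 1 \<le> card V"
proof -
  assume "V \<noteq> {}" then obtain a where a: "a \<in> V" by blast
  have "card (nbr V E a) \<le> card (V - {a})" using nbr_subset[OF graph] finite_V by (intro card_mono) auto
  moreover have "card (V - {a}) = card V - 1" "card V > 0"
    using a finite_V by (auto simp: card_Diff_singleton card_gt_0_iff)
  ultimately show ?thesis using min_nbrs a by fastforce
qed

lemma d_ge_two: "V \<noteq> {} \<Longrightarrow> 2 \<le> d"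
  using card_gt_d dense by fastforce

lemma arc_bounds:
  assumes X: "X \<subseteq> V" and Y: "Y \<subseteq> V"
  shows "card X * (d - card Y) \<le> arcs V E X (V - Y)"
    and "(card V - card Y) * (d - (card V - card X)) \<le> arcs V E X (V - Y)"
    and "(card V - card X) * (d - (card V - card Y)) \<le> arcs V E (V - X) Y"
    and "card Y * (d - card X) \<le> arcs V E (V - X) Y"
proof -
  have c: "card (V - X) = card V - card X" "card (V - Y) = card V - card Y"
    using X Y finite_V by (auto simp: card_Diff_subset finite_subset)
  have s: "V - (V - Y) = Y" "V - (V - X) = X" "V \<inter> X = X" "V \<inter> Y = Y" "V \<inter> (V - X) = V - X"
    "V \<inter> (V - Y) = V - Y" using X Y by auto
  show "card X * (d - card Y) \<le> arcs V E X (V - Y)"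
    using arcs_lower_bound[OF finite_V min_nbrs, of X "V - Y"] s by simp
  show "(card V - card Y) * (d - (card V - card X)) \<le> arcs V E X (V - Y)"
    using arcs_lower_bound[OF finite_V min_nbrs, of "V - Y" X] s c arcs_swap[of V E X "V - Y"] by simp
  show "(card V - card X) * (d - (card V - card Y)) \<le> arcs V E (V - X) Y"
    using arcs_lower_bound[OF finite_V min_nbrs, of "V - X" Y] s c by simp
  show "card Y * (d - card X) \<le> arcs V E (V - X) Y"
    using arcs_lower_bound[OF finite_V min_nbrs, of Y "V - X"] s c arcs_swap[of V E "V - X" Y] by simp
qed

text \<open>If \<open>V = X \<union> Y\<close> with \<open>|X| = d - 1\<close> and only \<open>|Y|\<close> arcs inside \<open>Y\<close>, then \<open>Y\<close> carries a perfect
  matching, since every vertex of \<open>Y\<close> needs at least one neighbour in \<open>Y\<close>.\<close>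

lemma matching_if_tight_inner_arcs:
  assumes XY: "X \<inter> Y = {}" "X \<union> Y = V" and cX: "card X + 1 = d"
    and inner: "arcs V E Y Y = card Y"
  shows "\<forall>b\<in>Y. card {c \<in> Y. {b, c} \<in> E} = 1"
proof
  fix b assume b: "b \<in> Y"
  have finX: "finite X" and finY: "finite Y" using XY finite_V by auto
  have ge: "1 \<le> card (nbr V E c \<inter> Y)" if c: "c \<in> Y" for c
  proof -
    have "nbr V E c \<subseteq> (nbr V E c \<inter> Y) \<union> X" using XY unfolding nbr_def by auto
    hence "card (nbr V E c) \<le> card ((nbr V E c \<inter> Y) \<union> X)"
      using finX finY by (intro card_mono) auto
    also have "\<dots> \<le> card (nbr V E c \<inter> Y) + card X" by (rule card_Un_le)
    moreover have "d \<le> card (nbr V E c)" using min_nbrs c XY(2) by blast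
    ultimately show ?thesis using cX by linarith
  qed
  have sum: "(\<Sum>c\<in>Y. card (nbr V E c \<inter> Y)) = card Y"
  proof -
    have "V \<inter> Y = Y" using XY(2) by blast
    thus ?thesis using inner arcs_eq_sum[OF finite_V, of E Y Y] by simp
  qed
  have eq: "{c \<in> Y. {b, c} \<in> E} = nbr V E b \<inter> Y" using XY unfolding nbr_def by auto
  show "card {c \<in> Y. {b, c} \<in> E} = 1"
  proof (rule ccontr)
    assume "card {c \<in> Y. {b, c} \<in> E} \<noteq> 1"
    hence "1 < card (nbr V E b \<inter> Y)" using ge[OF b] eq by simp
    hence "(\<Sum>c\<in>Y. (1::nat)) < (\<Sum>c\<in>Y. card (nbr V E c \<inter> Y))"
      using ge b finY by (intro sum_strict_mono_ex1) auto
    thus False using sum by simp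
  qed
qed

lemma is_join_if_tight_arcs:
  assumes X: "X \<subseteq> V" and Y: "Y \<subseteq> V" and cY: "card Y = d" and cX: "card X + 1 = d"
    and out: "arcs V E X (V - Y) = 0" and inner: "arcs V E (V - X) Y = card Y"
  shows "is_join V E"
proof -
  have finX: "finite X" and finY: "finite Y" using X Y finite_V by (auto intro: finite_subset)
  have nY: "nbr V E a = Y" if a: "a \<in> X" for a
  proof -
    have "nbr V E a \<subseteq> Y" using nbr_subset_if_no_arcs[OF finite_V X out a] .
    moreover have "card Y \<le> card (nbr V E a)" using min_nbrs a X cY by auto
    ultimately show ?thesis using finY by (metis card_seteq)
  qed
  have disj: "X \<inter> Y = {}" using nY nbr_subset[OF graph] by blast
  have un: "X \<union> Y = V"
  proof -
    have "card (X \<union> Y) = card X + card Y" using disj finX finY by (simp add: card_Un_disjoint)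
    hence "card V \<le> card (X \<union> Y)" using cX cY dense by simp
    thus ?thesis using X Y finite_V by (metis Un_least card_seteq)
  qed
  have XX: "\<forall>a\<in>X. \<forall>b\<in>X. {a, b} \<notin> E" using nY disj X unfolding nbr_def by blast
  have XY: "\<forall>a\<in>X. \<forall>b\<in>Y. {a, b} \<in> E" using nY unfolding nbr_def by auto
  have "V - X = Y" using disj un by auto
  hence "\<forall>b\<in>Y. card {c \<in> Y. {b, c} \<in> E} = 1"
    using matching_if_tight_inner_arcs[OF disj un cX] inner by simp
  thus ?thesis using is_join_if_structure[OF graph disj un XX XY] cX cY by simp
qed

text \<open>The case \<open>d = 2\<close>: the graph is a triangle, i.e. the join graph with \<open>l = 1\<close>.\<close>

lemma is_join_if_degree_two:
  assumes "d = 2" and "V \<noteq> {}"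
  shows "is_join V E"
proof -
  have n3: "card V = 3" using card_gt_d[OF assms(2)] dense assms(1) by simp
  obtain c where c: "c \<in> V" using assms(2) by blast
  have nb: "nbr V E a = V - {a}" if a: "a \<in> V" for a
  proof -
    have "card (V - {a}) = 2" using n3 a finite_V by (simp add: card_Diff_singleton)
    thus ?thesis using nbr_subset[OF graph, of a] min_nbrs a assms(1) finite_V by (metis card_seteq finite_Diff)
  qed
  hence ed: "\<And>a b. a \<in> V \<Longrightarrow> b \<in> V \<Longrightarrow> a \<noteq> b \<Longrightarrow> {a,b} \<in> E" unfolding nbr_def by auto
  have YY: "\<forall>b\<in>V - {c}. card {c'\<in>V - {c}. {b,c'}\<in>E} = 1"
  proof
    fix b assume b: "b \<in> V - {c}"
    have "{c'\<in>V - {c}. {b,c'}\<in>E} = V - {c} - {b}" using ed b graph_no_loop[OF graph] by auto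
    thus "card {c'\<in>V - {c}. {b,c'}\<in>E} = 1" using b c n3 finite_V by (simp add: card_Diff_singleton)
  qed
  have cc: "card {c} + 1 = card (V - {c})" using c n3 finite_V by (simp add: card_Diff_singleton)
  show ?thesis
    using is_join_if_structure[OF graph _ _ _ _ YY cc] c ed graph_no_loop[OF graph] by auto
qed

text \<open>Mixed cut bound when \<open>|X| < d \<le> |Y|\<close>: already the arcs from \<open>Y\<close> to \<open>V - X\<close> number at least
  \<open>|Y| \<ge> d\<close>, and equality forces the configuration of \<open>is_join_if_tight_arcs\<close>.\<close>

lemma mixed_cut_small_X_large_Y:
  assumes X: "X \<subseteq> V" "X \<noteq> {}" "card X < d" and Y: "Y \<subseteq> V" "d \<le> card Y"
  shows "d \<le> mixed_cut V E X Y \<and> (mixed_cut V E X Y = d \<longrightarrow> extremal_cut V E X Y)"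
proof -
  define e1 where "e1 = arcs V E X (V - Y)"
  define e2 where "e2 = arcs V E (V - X) Y"
  have cut: "mixed_cut V E X Y = e1 + e2" unfolding e1_def e2_def by (rule mixed_cut_split[OF finite_V])
  have bound: "card Y * (d - card X) \<le> e2" using arc_bounds(4)[OF X(1) Y(1)] unfolding e2_def .
  have Vne: "V \<noteq> {}" using X by auto
  have d2: "2 \<le> d" using d_ge_two[OF Vne] .
  obtain t where "d - card X = Suc t" using X(3) by (metis Suc_diff_Suc)
  hence e2: "card Y \<le> e2" using bound by simp
  have "extremal_cut V E X Y" if tight: "e1 + e2 = d"
  proof -
    have "card Y = d" "e1 = 0" "e2 = card Y" using e2 Y(2) tight by linarith+
    moreover have "card X + 1 = d"
    proof -
      have "card Y * (d - card X) \<le> card Y * 1" using bound \<open>e2 = card Y\<close> by simp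
      hence "d - card X \<le> 1" using \<open>card Y = d\<close> d2 by simp
      thus ?thesis using X(3) by linarith
    qed
    ultimately have "is_join V E" using is_join_if_tight_arcs[OF X(1) Y(1)] unfolding e1_def e2_def by simp
    moreover have "Y \<noteq> {}" "Y \<noteq> V" using \<open>card Y = d\<close> d2 card_gt_d[OF Vne] by auto
    ultimately show ?thesis unfolding extremal_cut_def by simp
  qed
  thus ?thesis using cut e2 Y(2) by auto
qed

text \<open>Mixed cut bound when \<open>|X| \<ge> d\<close> and \<open>|Y| \<ge> d\<close>: apply \<open>cross_products_bound\<close> to the
  complement sizes \<open>p = |V - Y|\<close> and \<open>q = |V - X|\<close>, both below \<open>d\<close>.\<close>

lemma mixed_cut_large_X_large_Y:
  assumes X: "X \<subseteq> V" "X \<noteq> V" "d \<le> card X" and Y: "Y \<subseteq> V" "d \<le> card Y"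
  shows "d \<le> mixed_cut V E X Y \<and> (mixed_cut V E X Y = d \<longrightarrow> extremal_cut V E X Y)"
proof -
  define e1 where "e1 = arcs V E X (V - Y)"
  define e2 where "e2 = arcs V E (V - X) Y"
  have cut: "mixed_cut V E X Y = e1 + e2" unfolding e1_def e2_def by (rule mixed_cut_split[OF finite_V])
  note bounds = arc_bounds[OF X(1) Y(1), folded e1_def e2_def]
  have Vne: "V \<noteq> {}" using X(1,2) by auto
  have d2: "2 \<le> d" using d_ge_two[OF Vne] .
  have cX: "card X < card V" using X finite_V by (auto simp: psubset_card_mono)
  define p where "p = card V - card Y"
  define q where "q = card V - card X"
  have pq: "p < d" "0 < q" "q < d" using X(3) Y(2) cX dense unfolding p_def q_def by linarith+
  have sum: "p * (d - q) + q * (d - p) \<le> e1 + e2" using bounds(2,3) unfolding p_def q_def by linarith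
  have "extremal_cut V E X Y" if tight: "e1 + e2 = d"
  proof (cases "p = 0")
    case True
    hence "Y = V" using card_seteq[OF finite_V Y(1)] unfolding p_def by simp
    have "q * d \<le> 1 * d" using sum tight True by simp
    hence "q = 1" using pq(2) d2 mult_le_cancel2[of q d 1] by simp
    moreover have "{a \<in> V. (a \<in> X) \<noteq> (a \<in> Y)} = V - X" using \<open>Y = V\<close> by auto
    moreover have "card (V - X) = q" using X(1) finite_V unfolding q_def by (simp add: card_Diff_subset finite_subset)
    ultimately show ?thesis using \<open>Y = V\<close> unfolding extremal_cut_def by simp
  next
    case False
    have "p * (d - q) + q * (d - p) = d" using sum tight cross_products_bound(1)[OF pq] by linarith
    hence "is_join V E" using cross_products_bound(2)[OF pq] False is_join_if_degree_two Vne by blast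
    moreover have "Y \<noteq> {}" "Y \<noteq> V" using False Y(2) d2 unfolding p_def by auto
    ultimately show ?thesis unfolding extremal_cut_def by simp
  qed
  thus ?thesis using cut sum cross_products_bound(1)[OF pq] by auto
qed

lemma mixed_cut_large_side:
  assumes X: "X \<subseteq> V" "X \<noteq> {}" "X \<noteq> V" and Y: "Y \<subseteq> V" "d \<le> card Y"
  shows "d \<le> mixed_cut V E X Y \<and> (mixed_cut V E X Y = d \<longrightarrow> extremal_cut V E X Y)"
  using mixed_cut_small_X_large_Y[OF X(1,2) _ Y] mixed_cut_large_X_large_Y[OF X(1,3) _ Y]
  by (cases "card X < d") simp_all

lemma mixed_cut_balanced:
  assumes X: "X \<subseteq> V" "X \<noteq> {}" "X \<noteq> V" and Y: "Y \<subseteq> V" "card Y < d" "card V - card Y < d"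
  shows "d \<le> mixed_cut V E X Y \<and> (mixed_cut V E X Y = d \<longrightarrow> extremal_cut V E X Y)"
proof -
  define e1 where "e1 = arcs V E X (V - Y)"
  define e2 where "e2 = arcs V E (V - X) Y"
  have cut: "mixed_cut V E X Y = e1 + e2" unfolding e1_def e2_def by (rule mixed_cut_split[OF finite_V])
  note bounds = arc_bounds[OF X(1) Y(1), folded e1_def e2_def]
  have cX: "0 < card X" "card X < card V"
    using X finite_V by (auto simp: card_gt_0_iff finite_subset psubset_card_mono)
  have cY: "card Y \<le> card V" using Y finite_V by (simp add: card_mono)
  have Vne: "V \<noteq> {}" using X by auto
  have d2: "2 \<le> d" using d_ge_two[OF Vne] .
  have "card X + (d - card Y) \<le> card X * (d - card Y) + 1"
    using cX Y(2) by (intro add_le_mult_plus_one) auto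
  moreover have "(card V - card X) + (d - (card V - card Y)) \<le> (card V - card X) * (d - (card V - card Y)) + 1"
    using cX Y(3) by (intro add_le_mult_plus_one) auto
  ultimately have lower: "2 * d \<le> e1 + e2 + 2" using bounds(1,3) cX cY Y(2,3) by linarith
  have "Y \<noteq> {}" "Y \<noteq> V" using Y(2,3) card_gt_d[OF Vne] by auto
  hence "e1 + e2 = d \<Longrightarrow> extremal_cut V E X Y"
    using lower d2 is_join_if_degree_two[OF _ Vne] unfolding extremal_cut_def by simp
  moreover have "d \<le> e1 + e2" using lower d2 by linarith
  ultimately show ?thesis using cut by simp
qed

text \<open>The case \<open>|V - Y| \<ge> d\<close> reduces to
  \<open>|Y| \<ge> d\<close> by complementing both sets.\<close>

theorem mixed_cut_bound:
  assumes X: "X \<subseteq> V" "X \<noteq> {}" "X \<noteq> V" and Y: "Y \<subseteq> V"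
  shows "d \<le> mixed_cut V E X Y" and "mixed_cut V E X Y = d \<Longrightarrow> extremal_cut V E X Y"
proof -
  have "d \<le> mixed_cut V E X Y \<and> (mixed_cut V E X Y = d \<longrightarrow> extremal_cut V E X Y)"
  proof (cases "d \<le> card Y")
    case True
    thus ?thesis using mixed_cut_large_side[OF X Y] by blast
  next
    case small: False
    have cVY: "card (V - Y) = card V - card Y" using Y finite_V by (simp add: card_Diff_subset finite_subset)
    show ?thesis
    proof (cases "d \<le> card (V - Y)")
      case True
      have "V - X \<subseteq> V" "V - X \<noteq> {}" "V - X \<noteq> V" "V - Y \<subseteq> V" using X by auto
      from mixed_cut_large_side[OF this True]
      show ?thesis unfolding mixed_cut_compl extremal_cut_compl[OF Y] .
    next
      case False
      thus ?thesis using mixed_cut_balanced[OF X Y] small cVY by simp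
    qed
  qed
  thus "d \<le> mixed_cut V E X Y" and "mixed_cut V E X Y = d \<Longrightarrow> extremal_cut V E X Y" by blast+
qed

end

lemma dense_graph_min_degree:
  assumes "graph V E" and "card V < 2 * min_degree V E"
  shows "dense_graph V E (min_degree V E)"
proof
  have "finite V" using assms(1) unfolding graph_def by simp
  thus "\<forall>a\<in>V. min_degree V E \<le> card (nbr V E a)"
    using min_degree_le[OF \<open>finite V\<close>, of _ E] by (simp add: degree_eq_card_nbr)
qed (fact assms)+

lemma dprod_edgeI: "{x, y} \<in> EG \<Longrightarrow> {a, b} \<in> EH \<Longrightarrow> {(x, a), (y, b)} \<in> dprod_E EG EH"
  unfolding dprod_E_def by blast

lemma dprod_edge_at:
  assumes "e \<in> dprod_E EG EH" and "(x, a) \<in> e"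
  obtains y b where "e = {(x, a), (y, b)}" "{x, y} \<in> EG" "{a, b} \<in> EH"
proof -
  obtain x1 y1 u1 v1 where e: "e = {(x1, u1), (y1, v1)}" "{x1, y1} \<in> EG" "{u1, v1} \<in> EH"
    using assms(1) unfolding dprod_E_def by blast
  show thesis
  proof (cases "(x, a) = (x1, u1)")
    case True
    thus ?thesis using that e by auto
  next
    case False
    hence "(x, a) = (y1, v1)" using assms(2) e(1) by auto
    thus ?thesis using that[of x1 u1] e by (auto simp: insert_commute)
  qed
qed

lemma finite_dprod_E:
  assumes "graph VG EG" "graph VH EH"
  shows "finite (dprod_E EG EH)"
proof -
  have "dprod_E EG EH \<subseteq> Pow (VG \<times> VH)"
    using graph_edge_vertices[OF assms(1)] graph_edge_vertices[OF assms(2)] unfolding dprod_E_def by blast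
  moreover have "finite VG" "finite VH" using assms unfolding graph_def by auto
  ultimately show ?thesis by (meson finite_Pow_iff finite_SigmaI finite_subset)
qed

lemma reachable_boundary_removed:
  assumes "{p, q} \<in> F" and "reachable (F - S) c p" and "\<not> reachable (F - S) c q"
  shows "{p, q} \<in> S"
proof (rule ccontr)
  assume "{p, q} \<notin> S"
  hence "reachable (F - S) c q"
    using assms(1,2) unfolding reachable_def by (auto intro: rtranclp.rtrancl_into_rtrancl)
  thus False using assms(3) by contradiction
qed

definition fiber :: "'b set \<Rightarrow> ('a \<times> 'b) set \<Rightarrow> 'a \<Rightarrow> 'b set" where
  "fiber VH A y = {b \<in> VH. (y, b) \<in> A}"

lemma fiber_subset: "fiber VH A y \<subseteq> VH"
  unfolding fiber_def by auto

definition fiber_cut_edges ::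
    "'a set \<Rightarrow> 'a set set \<Rightarrow> 'b set \<Rightarrow> 'b set set \<Rightarrow> ('a \<times> 'b) set \<Rightarrow> 'a \<Rightarrow> ('a \<times> 'b) set set" where
  "fiber_cut_edges VG EG VH EH A x =
     {{(x, a), (y, b)} | y a b. y \<in> nbr VG EG x \<and> (a, b) \<in> VH \<times> VH \<and> {a, b} \<in> EH \<and>
        (a \<in> fiber VH A x) \<noteq> (b \<in> fiber VH A y)}"

lemma card_fiber_cut_edges:
  assumes "graph VG EG" and "finite VH"
  shows "card (fiber_cut_edges VG EG VH EH A x) =
           (\<Sum>y\<in>nbr VG EG x. mixed_cut VH EH (fiber VH A x) (fiber VH A y))"
proof -
  define N where "N = nbr VG EG x"
  define P where "P y = {(a, b) \<in> VH \<times> VH. {a, b} \<in> EH \<and> (a \<in> fiber VH A x) \<noteq> (b \<in> fiber VH A y)}" for y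
  define \<phi> :: "'a \<times> 'b \<times> 'b \<Rightarrow> ('a \<times> 'b) set" where "\<phi> = (\<lambda>(y, a, b). {(x, a), (y, b)})"
  have "fiber_cut_edges VG EG VH EH A x = \<phi> ` Sigma N P"
  proof
    show "fiber_cut_edges VG EG VH EH A x \<subseteq> \<phi> ` Sigma N P"
    proof
      fix e assume "e \<in> fiber_cut_edges VG EG VH EH A x"
      then obtain y a b where "e = {(x, a), (y, b)}" "y \<in> N" "(a, b) \<in> P y"
        unfolding fiber_cut_edges_def N_def P_def by blast
      thus "e \<in> \<phi> ` Sigma N P" unfolding \<phi>_def by (intro image_eqI[of _ _ "(y, a, b)"]) auto
    qed
    show "\<phi> ` Sigma N P \<subseteq> fiber_cut_edges VG EG VH EH A x"
      unfolding fiber_cut_edges_def N_def P_def \<phi>_def by auto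
  qed
  moreover have "inj_on \<phi> (Sigma N P)"
  proof (rule inj_onI)
    fix p q assume p: "p \<in> Sigma N P" and q: "q \<in> Sigma N P" and eq: "\<phi> p = \<phi> q"
    obtain y a b y' a' b' where pq: "p = (y, a, b)" "q = (y', a', b')" by (cases p, cases q) auto
    have "x \<notin> N" using nbr_subset[OF assms(1)] unfolding N_def by blast
    hence "y \<noteq> x" "y' \<noteq> x" using p q pq by auto
    thus "p = q" using eq unfolding pq \<phi>_def by (auto simp: doubleton_eq_iff)
  qed
  moreover have "finite N" "\<And>y. finite (P y)"
    using assms nbr_subset[OF assms(1)] unfolding graph_def N_def P_def by (auto intro: finite_subset)
  ultimately have "card (fiber_cut_edges VG EG VH EH A x) = (\<Sum>y\<in>N. card (P y))"
    by (simp add: card_image)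
  thus ?thesis unfolding N_def P_def mixed_cut_def by simp
qed

locale separated_fiber = dense_graph VH EH d
  for VH :: "'b set" and EH :: "'b set set" and d :: nat +
  fixes VG :: "'a set" and EG :: "'a set set" and S :: "('a \<times> 'b) set set"
    and A :: "('a \<times> 'b) set" and x :: 'a
  assumes graph_G: "graph VG EG" and S_edges: "S \<subseteq> dprod_E EG EH" and x: "x \<in> VG"
    and boundary_removed: "\<And>p q. {p, q} \<in> dprod_E EG EH \<Longrightarrow> p \<in> A \<Longrightarrow> q \<notin> A \<Longrightarrow> {p, q} \<in> S"
    and fiber_x: "fiber VH A x \<noteq> {}" "fiber VH A x \<noteq> VH"
begin

lemma crossing_removed: "{p, q} \<in> dprod_E EG EH \<Longrightarrow> (p \<in> A) \<noteq> (q \<in> A) \<Longrightarrow> {p, q} \<in> S"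
  using boundary_removed[of p q] boundary_removed[of q p] by (cases "p \<in> A") (auto simp: insert_commute)

lemma fiber_cut_edges_removed: "fiber_cut_edges VG EG VH EH A x \<subseteq> S"
  unfolding fiber_cut_edges_def fiber_def nbr_def
  by (auto intro!: crossing_removed dprod_edgeI simp: insert_commute)

lemma finite_S: "finite S"
  using finite_subset[OF S_edges finite_dprod_E[OF graph_G graph]] .

lemma fiber_x_split: "fiber VH A x \<subseteq> VH" "fiber VH A x \<noteq> {}" "fiber VH A x \<noteq> VH"
  by (rule fiber_subset, rule fiber_x(1), rule fiber_x(2))

lemma VH_nonempty: "VH \<noteq> {}"
  using fiber_x_split by blast

text \<open>Each neighbour \<open>y\<close> of \<open>x\<close> contributes at least \<open>d\<close> removed edges.\<close>

lemma degree_bound: "degree VG EG x * d \<le> card S"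
proof -
  have "degree VG EG x * d = (\<Sum>y\<in>nbr VG EG x. d)" by (simp add: degree_eq_card_nbr)
  also have "\<dots> \<le> (\<Sum>y\<in>nbr VG EG x. mixed_cut VH EH (fiber VH A x) (fiber VH A y))"
    by (intro sum_mono) (rule mixed_cut_bound(1)[OF fiber_x_split fiber_subset])
  also have "\<dots> = card (fiber_cut_edges VG EG VH EH A x)"
    using card_fiber_cut_edges[OF graph_G finite_V] by simp
  also have "\<dots> \<le> card S" using card_mono[OF finite_S fiber_cut_edges_removed] .
  finally show ?thesis .
qed

lemma tight_cut:
  assumes tight: "card S = degree VG EG x * d"
  shows "S = fiber_cut_edges VG EG VH EH A x"
    and "y \<in> nbr VG EG x \<Longrightarrow> mixed_cut VH EH (fiber VH A x) (fiber VH A y) = d"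
proof -
  define C where "C y = mixed_cut VH EH (fiber VH A x) (fiber VH A y)" for y
  have ge: "d \<le> C y" for y using mixed_cut_bound(1)[OF fiber_x_split fiber_subset] unfolding C_def .
  have cardC: "card (fiber_cut_edges VG EG VH EH A x) = (\<Sum>y\<in>nbr VG EG x. C y)"
    using card_fiber_cut_edges[OF graph_G finite_V] unfolding C_def by simp
  have finN: "finite (nbr VG EG x)" using graph_G unfolding graph_def nbr_def by simp
  have "(\<Sum>y\<in>nbr VG EG x. C y) \<le> (\<Sum>y\<in>nbr VG EG x. d)"
    using card_mono[OF finite_S fiber_cut_edges_removed] cardC tight by (simp add: degree_eq_card_nbr)
  moreover have "(\<Sum>y\<in>nbr VG EG x. d) \<le> (\<Sum>y\<in>nbr VG EG x. C y)" using ge by (intro sum_mono)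
  ultimately have eq: "(\<Sum>y\<in>nbr VG EG x. C y) = (\<Sum>y\<in>nbr VG EG x. d)" by (rule antisym)
  hence "card (fiber_cut_edges VG EG VH EH A x) = card S" using cardC tight by (simp add: degree_eq_card_nbr)
  thus "S = fiber_cut_edges VG EG VH EH A x"
    using card_subset_eq[OF finite_S fiber_cut_edges_removed] by simp
  assume y: "y \<in> nbr VG EG x"
  show "C y = d"
  proof (rule ccontr)
    assume "C y \<noteq> d"
    hence "d < C y" using ge[of y] by simp
    hence "(\<Sum>y\<in>nbr VG EG x. d) < (\<Sum>y\<in>nbr VG EG x. C y)"
      using ge y finN by (intro sum_strict_mono_ex1) auto
    thus False using eq by simp
  qed
qed

text \<open>In the tight case, a neighbour \<open>y\<close> whose fibre is split by \<open>A\<close> has no neighbour besides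
  \<open>x\<close>: another neighbour \<open>z\<close> would give a removed edge between the fibres over \<open>y\<close> and \<open>z\<close>.\<close>

lemma pendant_if_split_fiber:
  assumes S: "S = fiber_cut_edges VG EG VH EH A x" and y: "y \<in> nbr VG EG x"
    and split: "fiber VH A y \<noteq> {}" "fiber VH A y \<noteq> VH"
  shows "nbr VG EG y = {x}"
proof -
  have yx: "y \<noteq> x" "x \<in> nbr VG EG y" using y nbr_subset[OF graph_G] x unfolding nbr_def
    by (auto simp: insert_commute)
  have "z = x" if z: "z \<in> nbr VG EG y" for z
  proof (rule ccontr)
    assume zx: "z \<noteq> x"
    have "d \<le> mixed_cut VH EH (fiber VH A y) (fiber VH A z)"
      using mixed_cut_bound(1)[OF fiber_subset split fiber_subset] .
    hence "mixed_cut VH EH (fiber VH A y) (fiber VH A z) \<noteq> 0" using d_ge_two[OF VH_nonempty] by linarith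
    hence "{(a, b) \<in> VH \<times> VH. {a, b} \<in> EH \<and> (a \<in> fiber VH A y) \<noteq> (b \<in> fiber VH A z)} \<noteq> {}"
      unfolding mixed_cut_def by (metis card.empty)
    then obtain a b where ab: "a \<in> VH" "b \<in> VH" "{a, b} \<in> EH"
      "(a \<in> fiber VH A y) \<noteq> (b \<in> fiber VH A z)" by blast
    have "{(y, a), (z, b)} \<in> dprod_E EG EH" using z ab(3) unfolding nbr_def by (auto intro: dprod_edgeI)
    hence "{(y, a), (z, b)} \<in> S" using ab crossing_removed unfolding fiber_def by auto
    then obtain y' a' b' where "{(y, a), (z, b)} = {(x, a'), (y', b')}"
      unfolding S fiber_cut_edges_def by blast
    thus False using zx yx(1) by (auto simp: doubleton_eq_iff)
  qed
  thus ?thesis using yx(2) by blast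
qed

lemma trivial_fiber_differs_once:
  assumes tight: "card S = degree VG EG x * d" and y: "y \<in> nbr VG EG x"
    and trivial: "fiber VH A y = {} \<or> fiber VH A y = VH"
  shows "card {a \<in> VH. (a \<in> fiber VH A x) \<noteq> (a \<in> fiber VH A y)} = 1"
  using mixed_cut_bound(2)[OF fiber_x_split fiber_subset tight_cut(2)[OF tight y]]
  unfolding extremal_cut_def if_P[OF trivial] .

text \<open>Hence all trivial neighbour fibres coincide: the fibres \<open>{}\<close> and \<open>V(H)\<close> differ from the
  fibre over \<open>x\<close> in complementary sets, which cannot both be singletons as \<open>|V(H)| \<ge> 3\<close>.\<close>

lemma trivial_fibers_agree:
  assumes tight: "card S = degree VG EG x * d" and y: "y \<in> nbr VG EG x" "y' \<in> nbr VG EG x"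
    and trivial: "fiber VH A y = {} \<or> fiber VH A y = VH" "fiber VH A y' = {} \<or> fiber VH A y' = VH"
  shows "fiber VH A y = fiber VH A y'"
proof (rule ccontr)
  define D where "D T = {a \<in> VH. (a \<in> fiber VH A x) \<noteq> (a \<in> T)}" for T
  assume "fiber VH A y \<noteq> fiber VH A y'"
  hence "D (fiber VH A y) \<union> D (fiber VH A y') = VH" "D (fiber VH A y) \<inter> D (fiber VH A y') = {}"
    using trivial unfolding D_def by auto
  moreover have "finite (D (fiber VH A y))" "finite (D (fiber VH A y'))"
    using finite_V unfolding D_def by auto
  ultimately have "card VH = card (D (fiber VH A y)) + card (D (fiber VH A y'))"
    using card_Un_disjoint by metis
  hence "card VH = 2"
    using trivial_fiber_differs_once[OF tight y(1) trivial(1)] trivial_fiber_differs_once[OF tight y(2) trivial(2)]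
    unfolding D_def by simp
  moreover have "3 \<le> card VH" using card_gt_d[OF VH_nonempty] d_ge_two[OF VH_nonempty] by simp
  ultimately show False by simp
qed

text \<open>In the tight case, if no neighbour fibre is split, then \<open>S\<close> is the set of edges at a single
  vertex \<open>(x, a)\<close>, where \<open>a\<close> is the vertex in which the fibre over \<open>x\<close> differs from the common
  neighbour fibre.\<close>

lemma star_if_trivial_fibers:
  assumes tight: "card S = degree VG EG x * d" and N: "nbr VG EG x \<noteq> {}"
    and trivial: "\<forall>y\<in>nbr VG EG x. fiber VH A y = {} \<or> fiber VH A y = VH"
  shows "\<exists>a\<in>VH. S = incident_edges (dprod_E EG EH) (x, a)"
proof -
  define X where "X = fiber VH A x"
  define D where "D T = {a \<in> VH. (a \<in> X) \<noteq> (a \<in> T)}" for T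
  obtain y0 where y0: "y0 \<in> nbr VG EG x" using N by blast
  define T where "T = fiber VH A y0"
  have same: "fiber VH A y = T" if y: "y \<in> nbr VG EG x" for y
    using trivial_fibers_agree[OF tight y y0] trivial y y0 unfolding T_def by blast
  have D1: "card (D T) = 1"
    using trivial_fiber_differs_once[OF tight y0] trivial y0 unfolding D_def X_def T_def by blast
  obtain a where a: "D T = {a}" using D1 by (auto simp: card_Suc_eq)
  have aV: "a \<in> VH" using a unfolding D_def by auto
  have cut_iff: "(a' \<in> X) \<noteq> (b \<in> fiber VH A y) \<longleftrightarrow> a' = a"
    if "a' \<in> VH" "b \<in> VH" "y \<in> nbr VG EG x" for a' b y
  proof -
    have "(b \<in> T) = (a' \<in> T)" using trivial y0 that unfolding T_def by auto
    thus ?thesis using same[OF that(3)] a that(1) unfolding D_def by auto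
  qed
  have "S = incident_edges (dprod_E EG EH) (x, a)"
  proof
    show "S \<subseteq> incident_edges (dprod_E EG EH) (x, a)"
      using S_edges cut_iff unfolding tight_cut(1)[OF tight] fiber_cut_edges_def X_def incident_edges_def
      by auto
    show "incident_edges (dprod_E EG EH) (x, a) \<subseteq> S"
    proof
      fix e assume "e \<in> incident_edges (dprod_E EG EH) (x, a)"
      then obtain y b where e: "e = {(x, a), (y, b)}" "{x, y} \<in> EG" "{a, b} \<in> EH"
        unfolding incident_edges_def by (auto elim: dprod_edge_at)
      have "y \<in> nbr VG EG x" "b \<in> VH"
        using graph_edge_vertices[OF graph_G e(2)] graph_edge_vertices[OF graph e(3)] e(2)
        unfolding nbr_def by auto
      thus "e \<in> S" using e cut_iff[of a b y] aV
        unfolding tight_cut(1)[OF tight] fiber_cut_edges_def X_def by blast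
    qed
  qed
  thus ?thesis using aV by blast
qed

text \<open>In the tight case, if \<open>x\<close> has minimum degree and some neighbour fibre is split, then
  \<open>G = K\<^sub>2\<close> (the split neighbour and \<open>x\<close> are each other's only neighbours) and \<open>H\<close> is a join
  graph (the split fibre gives a minimum mixed cut with nontrivial \<open>Y\<close>).\<close>

lemma K2_and_join_if_split_fiber:
  assumes tight: "card S = degree VG EG x * d" and conn: "connected VG EG"
    and min_x: "degree VG EG x = min_degree VG EG"
    and y: "y \<in> nbr VG EG x" and split: "fiber VH A y \<noteq> {}" "fiber VH A y \<noteq> VH"
  shows "graph_iso VG EG K2_V K2_E \<and> is_join VH EH"
proof -
  have finG: "finite VG" using graph_G unfolding graph_def by simp
  have ny: "nbr VG EG y = {x}" using pendant_if_split_fiber[OF tight_cut(1)[OF tight] y split] .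
  have "y \<in> VG" using y unfolding nbr_def by simp
  hence "card (nbr VG EG x) \<le> 1"
    using min_degree_le[OF finG, of y EG] ny min_x unfolding degree_eq_card_nbr by simp
  hence "nbr VG EG x = {y}" using y finG unfolding nbr_def by (auto simp: card_le_Suc0_iff_eq)
  hence "graph_iso VG EG K2_V K2_E" using K2_if_mutual_pendants[OF graph_G conn x _ ny] by simp
  moreover have "is_join VH EH"
    using mixed_cut_bound(2)[OF fiber_x_split fiber_subset tight_cut(2)[OF tight y]] split
    unfolding extremal_cut_def by simp
  ultimately show ?thesis ..
qed

end

lemma separated_fiber_component:
  assumes H: "dense_graph VH EH d" and G: "graph VG EG" and S: "S \<subseteq> dprod_E EG EH"
    and xuv: "x \<in> VG" "u \<in> VH" "v \<in> VH"
    and sep: "\<not> reachable (dprod_E EG EH - S) (x, u) (x, v)"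
  shows "separated_fiber VH EH d VG EG S {p. reachable (dprod_E EG EH - S) (x, u) p} x"
proof -
  define A where "A = {p. reachable (dprod_E EG EH - S) (x, u) p}"
  have "u \<in> fiber VH A x" using xuv(2) unfolding A_def fiber_def reachable_def by simp
  moreover have "v \<notin> fiber VH A x" using sep unfolding A_def fiber_def by simp
  ultimately have fx: "fiber VH A x \<noteq> {}" "fiber VH A x \<noteq> VH" using xuv(3) by blast+
  show ?thesis unfolding A_def[symmetric]
  proof (rule separated_fiber.intro[OF H], unfold_locales)
    show "{p, q} \<in> S" if "{p, q} \<in> dprod_E EG EH" "p \<in> A" "q \<notin> A" for p q
      using reachable_boundary_removed[OF that(1)] that(2,3) unfolding A_def by simp
  qed (fact G S xuv(1) fx)+
qed

theorem separated_fiber_bound: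
  fixes VG :: "'a set" and VH :: "'b set"
  assumes gG: "graph VG EG" "connected VG EG" "card VG \<ge> 2"
    and gH: "graph VH EH" "card VH < 2 * min_degree VH EH"
    and S: "S \<subseteq> dprod_E EG EH" and xuv: "x \<in> VG" "u \<in> VH" "v \<in> VH"
    and sep: "\<not> reachable (dprod_E EG EH - S) (x, u) (x, v)"
  shows "min_degree VG EG * min_degree VH EH \<le> card S"
    and "card S = min_degree VG EG * min_degree VH EH \<Longrightarrow>
           (graph_iso VG EG K2_V K2_E \<and> is_join VH EH) \<or>
           (\<exists>w\<in>dprod_V VG VH. S = incident_edges (dprod_E EG EH) w)"
proof -
  define dG where "dG = min_degree VG EG"
  define dH where "dH = min_degree VH EH"
  define A where "A = {p. reachable (dprod_E EG EH - S) (x, u) p}"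
  have finG: "finite VG" using gG(1) unfolding graph_def by simp
  interpret H: dense_graph VH EH dH using dense_graph_min_degree[OF gH] unfolding dH_def .
  interpret separated_fiber VH EH dH VG EG S A x
    using separated_fiber_component[OF H.dense_graph_axioms gG(1) S xuv sep] unfolding A_def .
  have dGx: "dG \<le> degree VG EG x" using min_degree_le[OF finG xuv(1)] unfolding dG_def .
  hence "dG * dH \<le> degree VG EG x * dH" by (rule mult_le_mono1)
  thus "min_degree VG EG * min_degree VH EH \<le> card S"
    using degree_bound unfolding dG_def dH_def by linarith
  assume eq: "card S = min_degree VG EG * min_degree VH EH"
  have "degree VG EG x * dH \<le> dG * dH" using degree_bound eq unfolding dG_def dH_def by simp
  hence "degree VG EG x = dG" using dGx H.d_ge_two[OF VH_nonempty] by simp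
  hence tight: "card S = degree VG EG x * dH" using eq unfolding dG_def dH_def by simp
  show "(graph_iso VG EG K2_V K2_E \<and> is_join VH EH) \<or>
        (\<exists>w\<in>dprod_V VG VH. S = incident_edges (dprod_E EG EH) w)"
  proof (cases "\<exists>y\<in>nbr VG EG x. fiber VH A y \<noteq> {} \<and> fiber VH A y \<noteq> VH")
    case True
    then obtain y where "y \<in> nbr VG EG x" "fiber VH A y \<noteq> {}" "fiber VH A y \<noteq> VH" by blast
    from K2_and_join_if_split_fiber[OF tight gG(2) _ this] show ?thesis
      using \<open>degree VG EG x = dG\<close> unfolding dG_def by blast
  next
    case False
    hence "\<exists>a\<in>VH. S = incident_edges (dprod_E EG EH) (x, a)"
      using star_if_trivial_fibers[OF tight connected_has_nbr[OF gG xuv(1)]] by blast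
    thus ?thesis using xuv(1) unfolding dprod_V_def by blast
  qed
qed

theorem lemma2:
  fixes VG :: "'a set" and EG :: "'a set set" and VH :: "'b set" and EH :: "'b set set"
    and S :: "('a \<times> 'b) set set"
  assumes "graph VG EG" and "graph VH EH"
    and "connected VG EG" and "connected VH EH"
    and "card VG \<ge> 2" and "card VH \<ge> 2"
    and "real (min_degree VH EH) > real (card VH) / 2"
    and "S \<subseteq> dprod_E EG EH"
  shows "(card S < min_degree VG EG * min_degree VH EH \<longrightarrow>
           (\<forall>x\<in>VG. \<forall>u\<in>VH. \<forall>v\<in>VH. reachable (dprod_E EG EH - S) (x, u) (x, v)))
       \<and> ((\<not> (graph_iso VG EG K2_V K2_E \<and>
                (\<exists>l::nat. l \<ge> 1 \<and> graph_iso VH EH (join_V l) (join_E l))))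
          \<and> card S = min_degree VG EG * min_degree VH EH
          \<and> (\<forall>w\<in>dprod_V VG VH. S \<noteq> incident_edges (dprod_E EG EH) w)
          \<longrightarrow> (\<forall>x\<in>VG. \<forall>u\<in>VH. \<forall>v\<in>VH. reachable (dprod_E EG EH - S) (x, u) (x, v)))"
proof -
  have "card VH < 2 * min_degree VH EH" using assms(7) by linarith
  note bound = separated_fiber_bound[OF assms(1,3,5,2) this assms(8)]
  show ?thesis
  proof (intro conjI impI ballI)
    fix x u v assume "card S < min_degree VG EG * min_degree VH EH" "x \<in> VG" "u \<in> VH" "v \<in> VH"
    thus "reachable (dprod_E EG EH - S) (x, u) (x, v)" using bound(1) not_le by blast
  next
    fix x u v assume h: "\<not> (graph_iso VG EG K2_V K2_E \<and> (\<exists>l\<ge>1. graph_iso VH EH (join_V l) (join_E l)))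
        \<and> card S = min_degree VG EG * min_degree VH EH
        \<and> (\<forall>w\<in>dprod_V VG VH. S \<noteq> incident_edges (dprod_E EG EH) w)"
      and xuv: "x \<in> VG" "u \<in> VH" "v \<in> VH"
    show "reachable (dprod_E EG EH - S) (x, u) (x, v)"
    proof (rule ccontr)
      assume "\<not> reachable (dprod_E EG EH - S) (x, u) (x, v)"
      from bound(2)[OF xuv this] h show False unfolding is_join_def by blast
    qed
  qed
qed

end
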